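(* Let $X$ and $Y$ be random variables with values in $\mathbb{N}=\{1,2,\dots\}$ whose probability mass functions are non-increasing on $\mathbb{N}$. If $X\le_{st}Y$ (i.e. $\Pr(X>t)\le\Pr(Y>t)$ for all $t\in\mathbb{R}$), then $X\le_{wd}Y$.
   Context: For a real random variable $X$, its Lévy concentration function is $Q_X(\varepsilon)=\sup_{x_0\in\mathbb{R}}\Pr\{X\in[x_0,x_0+\varepsilon]\}$, $\varepsilon>0$. For random variables $X,Y$, write $X\le_{wd}Y$ if $Q_X(\varepsilon)\ge Q_Y(\varepsilon)$ for all $\varepsilon>0$. *)

theory Defs
  imports "HOL-Probability.Probability"
begin

definition levy_conc :: "'a measure \<Rightarrow> ('a \<Rightarrow> real) \<Rightarrow> real \<Rightarrow> real" where
  "levy_conc M X \<epsilon> = (SUP x0::real. measure M {\<omega> \<in> space M. X \<omega> \<in> {x0..x0 + \<epsilon>}})"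

definition le_wd :: "'a measure \<Rightarrow> ('a \<Rightarrow> real) \<Rightarrow> 'b measure \<Rightarrow> ('b \<Rightarrow> real) \<Rightarrow> bool" where
  "le_wd M X N Y \<longleftrightarrow> (\<forall>\<epsilon>>0. levy_conc M X \<epsilon> \<ge> levy_conc N Y \<epsilon>)"

definition le_st :: "'a measure \<Rightarrow> ('a \<Rightarrow> real) \<Rightarrow> 'b measure \<Rightarrow> ('b \<Rightarrow> real) \<Rightarrow> bool" where
  "le_st M X N Y \<longleftrightarrow> (\<forall>t::real. measure M {\<omega> \<in> space M. X \<omega> > t} \<le> measure N {\<omega> \<in> space N. Y \<omega> > t})"

end

theory Submission
  imports Defs
begin

text \<open>For a probability mass function on \<open>{1,2,\<dots>}\<close> that is non-increasing, the window
  \<open>[x0, x0 + \<epsilon>]\<close> carries the most mass when it is slid down to \<open>[1, 1 + \<epsilon>]\<close>: shifting by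
  \<open>a - 1\<close>, where \<open>a\<close> is the smallest positive integer \<open>\<ge> x0\<close>, maps the integers of the first window
  injectively into the second without decreasing any point mass. So the concentration function
  of such a variable is \<open>1 - Pr(X > 1 + \<epsilon>)\<close>, which is antitone in the stochastic order.\<close>

lemma antimono_from_one:
  fixes p :: "nat \<Rightarrow> 'a::order"
  assumes "\<And>k. 1 \<le> k \<Longrightarrow> p (Suc k) \<le> p k" and "1 \<le> j" and "j \<le> k"
  shows "p k \<le> p j"
  using assms(3)
proof (induction k rule: dec_induct)
  case (step n)
  then show ?case using assms(1,2) by (meson order_trans)
qed simp

lemma finite_nat_in_real_interval: "finite {k::nat. real k \<in> {a..b}}"
  by (rule finite_subset[of _ "{..nat \<lceil>b\<rceil>}"]) (auto, linarith)

lemma sum_real_interval_le_sum_initial_interval: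
  fixes p :: "nat \<Rightarrow> real"
  assumes nonneg: "\<And>k. 0 \<le> p k" and p0: "p 0 = 0"
    and antimono: "\<And>k. 1 \<le> k \<Longrightarrow> p (Suc k) \<le> p k"
  shows "(\<Sum>k | real k \<in> {x0..x0 + \<epsilon>}. p k) \<le> (\<Sum>k | real k \<in> {1..1 + \<epsilon>}. p k)"
proof -
  define K where "K = {k::nat. real k \<in> {x0..x0 + \<epsilon>}} - {0}"
  define a where "a = max 1 (nat \<lceil>x0\<rceil>)"
  define shift where "shift k = k + 1 - a" for k
  have a: "1 \<le> a" "x0 \<le> real a"
    using real_nat_ceiling_ge[of x0] unfolding a_def by (auto simp: of_nat_max)
  have K_ge_a: "a \<le> k" if "k \<in> K" for k
    using that unfolding K_def a_def by auto
  have "(\<Sum>k | real k \<in> {x0..x0 + \<epsilon>}. p k) = sum p K"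
    unfolding K_def using p0 by (intro sum.mono_neutral_right finite_nat_in_real_interval) auto
  also have "\<dots> \<le> (\<Sum>k\<in>K. p (shift k))"
  proof (rule sum_mono)
    fix k assume "k \<in> K"
    then show "p k \<le> p (shift k)"
      using K_ge_a[of k] a(1) antimono_from_one[of p "shift k" k] by (simp add: antimono shift_def)
  qed
  also have "\<dots> = sum p (shift ` K)"
  proof -
    have "inj_on shift K"
      unfolding inj_on_def shift_def using K_ge_a by fastforce
    then show ?thesis by (simp add: sum.reindex)
  qed
  also have "\<dots> \<le> (\<Sum>k | real k \<in> {1..1 + \<epsilon>}. p k)"
  proof (rule sum_mono2[OF finite_nat_in_real_interval])
    show "shift ` K \<subseteq> {k. real k \<in> {1..1 + \<epsilon>}}"
      using a K_ge_a by (force simp: K_def shift_def of_nat_diff)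
  qed (use nonneg in auto)
  finally show ?thesis .
qed

context prob_space
begin

lemma prob_in_finite_set_eq_sum:
  assumes X: "X \<in> measurable M (count_space UNIV)" and "finite K"
  shows "prob {\<omega> \<in> space M. X \<omega> \<in> K} = (\<Sum>k\<in>K. prob {\<omega> \<in> space M. X \<omega> = k})"
proof -
  have "prob {\<omega> \<in> space M. X \<omega> \<in> K} = prob (\<Union>k\<in>K. {\<omega> \<in> space M. X \<omega> = k})"
    by (rule arg_cong[where f = prob]) auto
  also have "\<dots> = (\<Sum>k\<in>K. prob {\<omega> \<in> space M. X \<omega> = k})"
    using X \<open>finite K\<close>
    by (intro finite_measure_finite_Union) (auto simp: disjoint_family_on_def)
  finally show ?thesis .
qed

lemma levy_conc_nat_antitone_pmf:
  fixes X :: "'a \<Rightarrow> nat"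
  assumes X: "X \<in> measurable M (count_space UNIV)"
    and pos: "\<forall>\<omega>\<in>space M. 1 \<le> X \<omega>"
    and antimono: "\<forall>k\<ge>1. prob {\<omega> \<in> space M. X \<omega> = Suc k} \<le> prob {\<omega> \<in> space M. X \<omega> = k}"
  shows "levy_conc M (\<lambda>\<omega>. real (X \<omega>)) \<epsilon> = 1 - prob {\<omega> \<in> space M. real (X \<omega>) > 1 + \<epsilon>}"
proof -
  define p where "p k = prob {\<omega> \<in> space M. X \<omega> = k}" for k
  define window where "window x0 = prob {\<omega> \<in> space M. real (X \<omega>) \<in> {x0..x0 + \<epsilon>}}" for x0
  have window_eq_sum: "window x0 = (\<Sum>k | real k \<in> {x0..x0 + \<epsilon>}. p k)" for x0
    using prob_in_finite_set_eq_sum[OF X finite_nat_in_real_interval]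
    unfolding window_def p_def by simp
  have "p 0 = 0"
    using pos unfolding p_def by (metis (mono_tags) Collect_empty_eq measure_empty not_one_le_zero)
  then have window_le: "window x0 \<le> window 1" for x0
    unfolding window_eq_sum using antimono
    by (intro sum_real_interval_le_sum_initial_interval) (auto simp: p_def)
  have "levy_conc M (\<lambda>\<omega>. real (X \<omega>)) \<epsilon> = window 1"
    unfolding levy_conc_def window_def[symmetric] using window_le by (intro cSup_eq_maximum) auto
  also have "\<dots> = prob (space M - {\<omega> \<in> space M. real (X \<omega>) > 1 + \<epsilon>})"
    unfolding window_def using pos by (intro arg_cong[where f = prob]) auto
  also have "\<dots> = 1 - prob {\<omega> \<in> space M. real (X \<omega>) > 1 + \<epsilon>}"
    using X by (intro prob_compl) measurable
  finally show ?thesis .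
qed

end

theorem proposition3p2:
  fixes M :: "'a measure" and N :: "'b measure"
    and X :: "'a \<Rightarrow> nat" and Y :: "'b \<Rightarrow> nat"
  assumes "prob_space M" and "prob_space N"
    and "X \<in> measurable M (count_space UNIV)"
    and "Y \<in> measurable N (count_space UNIV)"
    and "\<forall>\<omega>\<in>space M. X \<omega> \<ge> 1"
    and "\<forall>\<omega>\<in>space N. Y \<omega> \<ge> 1"
    and "\<forall>k\<ge>1. measure M {\<omega> \<in> space M. X \<omega> = Suc k} \<le> measure M {\<omega> \<in> space M. X \<omega> = k}"
    and "\<forall>k\<ge>1. measure N {\<omega> \<in> space N. Y \<omega> = Suc k} \<le> measure N {\<omega> \<in> space N. Y \<omega> = k}"
    and "le_st M (\<lambda>\<omega>. real (X \<omega>)) N (\<lambda>\<omega>. real (Y \<omega>))"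
  shows "le_wd M (\<lambda>\<omega>. real (X \<omega>)) N (\<lambda>\<omega>. real (Y \<omega>))"
proof -
  have "levy_conc M (\<lambda>\<omega>. real (X \<omega>)) \<epsilon> = 1 - measure M {\<omega> \<in> space M. real (X \<omega>) > 1 + \<epsilon>}"
    and "levy_conc N (\<lambda>\<omega>. real (Y \<omega>)) \<epsilon> = 1 - measure N {\<omega> \<in> space N. real (Y \<omega>) > 1 + \<epsilon>}"
    for \<epsilon>
    using prob_space.levy_conc_nat_antitone_pmf[OF assms(1,3,5,7)]
      prob_space.levy_conc_nat_antitone_pmf[OF assms(2,4,6,8)] by auto
  with assms(9) show ?thesis
    unfolding le_wd_def le_st_def by simp
qed

end
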